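(* Fix integers $n\ge 3$, $k\ge 2$, $s>0$ and integers $d_i,g_i$ for $1\le i\le s$ with $d_i>g_i\ge 0$ for all $i$, such that $$\sum_{i=1}^{s}(kd_i+1-g_i)\le \binom{n+k}{n}.$$ Then $$\sum_{i=1}^{s}((k+1)d_i+1-g_i)<\binom{n+k+1}{n}.$$ *)

theory Defs
  imports Main
begin

end

theory Submission
  imports Defs
begin

text \<open>Write \<open>A = \<Sum>(k d\<^sub>i + 1 - g\<^sub>i)\<close> and \<open>D = \<Sum>d\<^sub>i\<close>, so that the new sum is \<open>A + D\<close>.
  Since \<open>g\<^sub>i \<le> d\<^sub>i\<close>, every summand of \<open>A\<close> exceeds \<open>(k - 1) d\<^sub>i\<close>, hence \<open>(k - 1) D < A\<close>
  and \<open>(k - 1)(A + D) < k A \<le> k (n+k choose n)\<close>.  Passing from \<open>n+k choose n\<close> to \<open>n+k+1 choose n\<close>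
  multiplies by \<open>(n + k + 1)/(k + 1)\<close>, which is at least \<open>k/(k - 1)\<close> as soon as
  \<open>(k - 1) n \<ge> k + 1\<close>; this is where \<open>n \<ge> 3\<close> and \<open>k \<ge> 2\<close> enter.\<close>

lemma sum_shifted_weights_gt:
  fixes c :: "'a :: linordered_idom"
  assumes "finite I" and "I \<noteq> {}" and "\<And>i. i \<in> I \<Longrightarrow> g i \<le> d i"
  shows "(c - 1) * (\<Sum>i\<in>I. d i) < (\<Sum>i\<in>I. c * d i + 1 - g i)"
proof -
  have "(\<Sum>i\<in>I. (c - 1) * d i) < (\<Sum>i\<in>I. c * d i + 1 - g i)"
    using assms by (intro sum_strict_mono)
      (auto simp: algebra_simps intro: le_less_trans[OF assms(3)])
  then show ?thesis
    by (simp add: sum_distrib_left)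
qed

lemma less_of_scaled_bounds:
  fixes k m T C C' :: "'a :: linordered_idom"
  assumes "k \<ge> 2" and "C \<ge> 0"
    and T_bound: "(k - 1) * T < k * C"
    and ratio: "k * (k + 1) \<le> (k - 1) * m"
    and C'_eq: "(k + 1) * C' = m * C"
  shows "T < C'"
proof -
  have "(k - 1) * (k + 1) * T < (k + 1) * (k * C)"
    using T_bound \<open>k \<ge> 2\<close> by (simp add: mult.assoc mult.left_commute)
  also have "\<dots> = k * (k + 1) * C"
    by (simp add: algebra_simps)
  also have "\<dots> \<le> (k - 1) * m * C"
    using ratio \<open>C \<ge> 0\<close> by (rule mult_right_mono)
  also have "\<dots> = (k - 1) * (k + 1) * C'"
    using C'_eq by (simp add: mult.assoc)
  finally show ?thesis
    using \<open>k \<ge> 2\<close> by (simp add: mult_less_cancel_left)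
qed

lemma Suc_times_binomial_add_Suc:
  "(k + 1) * ((n + k + 1) choose n) = (n + k + 1) * ((n + k) choose n)"
  using binomial_absorb_comp[of "n + k + 1" n] by simp

theorem lemma3p11:
  fixes n k s :: nat and d g :: "nat \<Rightarrow> int"
  assumes "n \<ge> 3" and "k \<ge> 2" and "s > 0"
    and "\<And>i. 1 \<le> i \<Longrightarrow> i \<le> s \<Longrightarrow> d i > g i \<and> g i \<ge> 0"
    and "(\<Sum>i=1..s. int k * d i + 1 - g i) \<le> int ((n + k) choose n)"
  shows "(\<Sum>i=1..s. (int k + 1) * d i + 1 - g i) < int ((n + k + 1) choose n)"
proof -
  define A where "A = (\<Sum>i=1..s. int k * d i + 1 - g i)"
  define D where "D = (\<Sum>i=1..s. d i)"
  have split: "(\<Sum>i=1..s. (int k + 1) * d i + 1 - g i) = A + D"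
    unfolding A_def D_def by (simp add: sum.distrib[symmetric] algebra_simps)
  have "(int k - 1) * D < A"
    unfolding A_def D_def using assms(3,4)
    by (intro sum_shifted_weights_gt) (auto simp: less_imp_le)
  then have "(int k - 1) * (A + D) < int k * A"
    by (simp add: algebra_simps)
  also have "\<dots> \<le> int k * int ((n + k) choose n)"
    using assms(5) unfolding A_def by (simp add: mult_left_mono)
  finally have sum_bound: "(int k - 1) * (A + D) < int k * int ((n + k) choose n)" .
  have "2 * (int n - 1) \<le> int k * (int n - 1)"
    using assms(1,2) by (intro mult_right_mono) auto
  then have ratio: "int k * (int k + 1) \<le> (int k - 1) * int (n + k + 1)"
    using assms(1) by (simp add: algebra_simps)
  have binomial_step: "(int k + 1) * int ((n + k + 1) choose n) = int (n + k + 1) * int ((n + k) choose n)"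
    using Suc_times_binomial_add_Suc[of k n, THEN arg_cong[where f = int]]
    by (simp only: of_nat_mult of_nat_add of_nat_1)
  show ?thesis
    unfolding split using assms(2)
    by (intro less_of_scaled_bounds[OF _ _ sum_bound ratio binomial_step]) simp_all
qed

end
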